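(* Let $\lambda>0$, $d\ge0$ be constants and let $q$ be a probability measure on $(0,\infty)$ of the form $q=q_a+\sum_{r^j\in\mathcal D}p^j\delta_{r^j}$, with $q_a$ absolutely continuous w.r.t. Lebesgue measure, $\mathcal D\subset(0,\infty)$ finite, $p^j>0$, and finite mean. Let $\rho^r\ge0$ be a solution with finite mass $N=\int_0^\infty\rho^r dr\in(0,\infty)$ of the stationary equation $\rho^r-\rho^s+\lambda q((s,r])=d\int_{(s,r]}\rho^\alpha d\alpha$ for all $0\le s<r$, and define $\mu^{\rm in}=\lambda/N$, $\mu^{\rm out}=\rho^0/N$. Let $\hat q(\xi)=\int_{[0,\infty)}e^{-\xi x}q(dx)$ denote the Laplace transform of $q$. Then: (1) $\mu^{\rm out}=\mu^{\rm in}-d$; (2) if $d>0$, then $N=\lambda\dfrac{1-\hat q(d)}{d}$; (3) if $d>0$, then $\mu^{\rm in}=\dfrac{d}{1-\hat q(d)}$ and $\mu^{\rm out}=\dfrac{d\hat q(d)}{1-\hat q(d)}=\mu^{\rm in}\hat q(d)$.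
   Context: $\delta_x$ denotes the Dirac measure at $x$. $\rho^0$ is the value of the stationary density at remaining time $r=0$ (interpreted as the exit rate of prisoners completing their sentences). *)

theory Defs
  imports "HOL-Probability.Probability"
begin

definition laplace_tr :: "real measure \<Rightarrow> real \<Rightarrow> real" where
  "laplace_tr q \<xi> = (\<integral>x. exp (- \<xi> * x) \<partial>q)"

end

theory Submission
  imports Defs
begin

(* With s = 0 the stationary equation reads
     rho r = rho 0 - lam * q((0,r]) + d * integral_(0,r] rho.
   As r -> oo the right-hand side tends to rho 0 - lam + d * N, and an integrable function can
   only converge to 0 at infinity; hence rho 0 = lam - d * N.  For d > 0, multiply the equation
   by exp(-d r) and integrate over (0,oo): by Tonelli both cumulative terms become Laplace
   transforms, integral exp(-d r) q((0,r]) dr = hat q(d) / d and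
   integral exp(-d r) (integral_(0,r] rho) dr = (1/d) integral exp(-d r) rho r dr, so the rho-terms
   cancel and rho 0 = lam * hat q(d).  The stated formulas follow by algebra. *)

lemma integrable_lborel_tendsto_at_top_eq_0:
  fixes f :: "real \<Rightarrow> real"
  assumes f: "integrable lborel f" and lim: "(f \<longlongrightarrow> L) at_top"
  shows "L = 0"
proof (rule ccontr)
  assume "L \<noteq> 0"
  define c where "c = \<bar>L\<bar> / 2"
  have "c > 0" "c < \<bar>L\<bar>" using \<open>L \<noteq> 0\<close> by (auto simp: c_def)
  then have "\<forall>\<^sub>F x in at_top. c < \<bar>f x\<bar>"
    using order_tendstoD(1)[OF tendsto_rabs[OF lim]] by blast
  then obtain R where R: "\<And>x. x \<ge> R \<Longrightarrow> c < \<bar>f x\<bar>"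
    by (auto simp: eventually_at_top_linorder)
  have bound: "c * real n \<le> (\<integral>x. \<bar>f x\<bar> \<partial>lborel)" for n
  proof -
    have "c * real n = (\<integral>x. indicator {R..R + real n} x * c \<partial>lborel)"
      by simp
    also have "\<dots> \<le> (\<integral>x. \<bar>f x\<bar> \<partial>lborel)"
    proof (rule integral_mono)
      show "integrable lborel (\<lambda>x. indicator {R..R + real n} x * c)"
        by (intro integrable_mult_left integrable_real_indicator) auto
      show "indicator {R..R + real n} x * c \<le> \<bar>f x\<bar>" for x
        using R[of x] \<open>c > 0\<close> by (auto simp: indicator_def less_imp_le)
    qed (use f in simp)
    finally show ?thesis .
  qed
  obtain n :: nat where "(\<integral>x. \<bar>f x\<bar> \<partial>lborel) / c < real n"
    using reals_Archimedean2 by blast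
  then have "(\<integral>x. \<bar>f x\<bar> \<partial>lborel) < c * real n"
    using \<open>c > 0\<close> by (simp add: pos_divide_less_eq mult.commute)
  with bound show False
    by (meson not_le)
qed

lemma nn_integral_exp_neg_atLeast:
  fixes c d :: real
  assumes "d > 0"
  shows "(\<integral>\<^sup>+ r. ennreal (indicator {c..} r * exp (- d * r)) \<partial>lborel) = ennreal (exp (- d * c) / d)"
proof (rule nn_integral_has_integral_lborel)
  have "(\<lambda>r. indicator {c..} r * exp (- d * r)) = (\<lambda>r. if r \<in> {c..} then exp (- d * r) else 0)"
    by (auto simp: indicator_def)
  then show "((\<lambda>r. indicator {c..} r * exp (- d * r)) has_integral exp (- d * c) / d) UNIV"
    using has_integral_exp_minus_to_infinity[OF assms, of c]
    by (simp only: has_integral_restrict_UNIV)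
qed auto

lemma nn_integral_cumulative_swap:
  fixes M :: "real measure" and g w :: "real \<Rightarrow> ennreal"
  assumes "sigma_finite_measure M" and M: "sets M = sets borel"
    and [measurable]: "g \<in> borel_measurable borel" "w \<in> borel_measurable borel"
  shows "(\<integral>\<^sup>+ r. w r * (\<integral>\<^sup>+ x. indicator {..r} x * g x \<partial>M) \<partial>lborel)
    = (\<integral>\<^sup>+ x. g x * (\<integral>\<^sup>+ r. indicator {x..} r * w r \<partial>lborel) \<partial>M)"
proof -
  interpret pair_sigma_finite M lborel
    using assms(1) by (simp add: pair_sigma_finite_def lborel.sigma_finite_measure_axioms)
  note [measurable_cong] = M
  have "(\<lambda>(x, r). w r * (indicator {..r} x * g x))
      = (\<lambda>p. w (snd p) * (if fst p \<le> snd p then g (fst p) else 0))"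
    by (auto simp: indicator_def)
  also have "\<dots> \<in> borel_measurable (M \<Otimes>\<^sub>M lborel)"
    by measurable
  finally have joint: "(\<lambda>(x, r). w r * (indicator {..r} x * g x)) \<in> borel_measurable (M \<Otimes>\<^sub>M lborel)" .
  have "(\<integral>\<^sup>+ r. w r * (\<integral>\<^sup>+ x. indicator {..r} x * g x \<partial>M) \<partial>lborel)
      = (\<integral>\<^sup>+ r. (\<integral>\<^sup>+ x. w r * (indicator {..r} x * g x) \<partial>M) \<partial>lborel)"
    by (simp add: nn_integral_cmult)
  also have "\<dots> = (\<integral>\<^sup>+ x. (\<integral>\<^sup>+ r. w r * (indicator {..r} x * g x) \<partial>lborel) \<partial>M)"
    by (rule Fubini'[OF joint])
  also have "\<dots> = (\<integral>\<^sup>+ x. g x * (\<integral>\<^sup>+ r. indicator {x..} r * w r \<partial>lborel) \<partial>M)"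
  proof (rule nn_integral_cong)
    fix x
    have "(\<integral>\<^sup>+ r. w r * (indicator {..r} x * g x) \<partial>lborel) = (\<integral>\<^sup>+ r. g x * (indicator {x..} r * w r) \<partial>lborel)"
      by (intro nn_integral_cong) (simp add: indicator_def mult.commute)
    then show "(\<integral>\<^sup>+ r. w r * (indicator {..r} x * g x) \<partial>lborel) = g x * (\<integral>\<^sup>+ r. indicator {x..} r * w r \<partial>lborel)"
      by (simp add: nn_integral_cmult)
  qed
  finally show ?thesis .
qed

lemma nn_integral_exp_neg_on_positive_atLeast:
  fixes c d :: real
  assumes "0 < c" and "0 < d"
  shows "(\<integral>\<^sup>+ r. indicator {c..} r * ennreal (indicator {0<..} r * exp (- d * r)) \<partial>lborel)
    = ennreal (exp (- d * c) / d)"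
proof -
  have "(\<integral>\<^sup>+ r. indicator {c..} r * ennreal (indicator {0<..} r * exp (- d * r)) \<partial>lborel)
      = (\<integral>\<^sup>+ r. ennreal (indicator {c..} r * exp (- d * r)) \<partial>lborel)"
    using assms(1) by (intro nn_integral_cong) (simp add: indicator_def)
  also have "\<dots> = ennreal (exp (- d * c) / d)"
    by (rule nn_integral_exp_neg_atLeast[OF assms(2)])
  finally show ?thesis .
qed

context
  fixes M :: "real measure" and g :: "real \<Rightarrow> real"
  assumes sets_M: "sets M = sets borel" and integrable_g: "integrable M g"
    and g_nonneg: "\<And>x. 0 \<le> g x"
begin

lemma integrable_indicator_atMost_mult: "integrable M (\<lambda>x. indicator {..r} x * g x)"
  using integrable_mult_indicator[OF _ integrable_g, of "{..r}"] by (simp add: sets_M)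

lemma mono_cumulative_integral: "mono (\<lambda>r. \<integral>x. indicator {..r} x * g x \<partial>M)"
proof (rule monoI)
  fix r s :: real
  assume "r \<le> s"
  then show "(\<integral>x. indicator {..r} x * g x \<partial>M) \<le> (\<integral>x. indicator {..s} x * g x \<partial>M)"
    by (intro integral_mono integrable_indicator_atMost_mult) (auto simp: indicator_def g_nonneg)
qed

lemma ennreal_cumulative_integral:
  "ennreal (\<integral>x. indicator {..r} x * g x \<partial>M) = (\<integral>\<^sup>+ x. indicator {..r} x * ennreal (g x) \<partial>M)"
proof -
  have "(\<integral>\<^sup>+ x. ennreal (indicator {..r} x * g x) \<partial>M) = ennreal (\<integral>x. indicator {..r} x * g x \<partial>M)"
    by (rule nn_integral_eq_integral) (auto simp: integrable_indicator_atMost_mult g_nonneg)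
  then show ?thesis
    by (simp add: indicator_mult_ennreal)
qed

lemma integrable_exp_neg_mult:
  assumes "\<And>x. x \<le> 0 \<Longrightarrow> g x = 0" and "0 \<le> d"
  shows "integrable M (\<lambda>x. exp (- d * x) * g x)"
proof (rule Bochner_Integration.integrable_bound[OF integrable_g])
  show "(\<lambda>x. exp (- d * x) * g x) \<in> borel_measurable M"
    using borel_measurable_integrable[OF integrable_g]
    unfolding measurable_cong_sets[OF sets_M refl] by measurable
  show "AE x in M. norm (exp (- d * x) * g x) \<le> norm (g x)"
  proof (rule AE_I2)
    fix x
    show "norm (exp (- d * x) * g x) \<le> norm (g x)"
      using assms g_nonneg[of x] by (cases "0 < x") (auto simp: mult_left_le_one_le)
  qed
qed

lemma nn_integral_exp_neg_tail:
  assumes g_nonpos: "\<And>x. x \<le> 0 \<Longrightarrow> g x = 0" and d: "0 < d"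
  shows "(\<integral>\<^sup>+ x. ennreal (g x) *
      (\<integral>\<^sup>+ r. indicator {x..} r * ennreal (indicator {0<..} r * exp (- d * r)) \<partial>lborel) \<partial>M)
    = ennreal ((\<integral>x. exp (- d * x) * g x \<partial>M) / d)"
proof -
  have "(\<integral>\<^sup>+ x. ennreal (g x) *
      (\<integral>\<^sup>+ r. indicator {x..} r * ennreal (indicator {0<..} r * exp (- d * r)) \<partial>lborel) \<partial>M)
      = (\<integral>\<^sup>+ x. ennreal (exp (- d * x) * g x / d) \<partial>M)"
  proof (rule nn_integral_cong)
    fix x
    show "ennreal (g x) * (\<integral>\<^sup>+ r. indicator {x..} r * ennreal (indicator {0<..} r * exp (- d * r)) \<partial>lborel)
        = ennreal (exp (- d * x) * g x / d)"
      using g_nonneg[of x] g_nonpos[of x] nn_integral_exp_neg_on_positive_atLeast[of x d] d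
      by (cases "0 < x") (simp_all add: ennreal_mult'[symmetric] mult.commute)
  qed
  also have "\<dots> = ennreal (\<integral>x. exp (- d * x) * g x / d \<partial>M)"
    using integrable_exp_neg_mult[OF g_nonpos, of d] d g_nonneg
    by (intro nn_integral_eq_integral) auto
  finally show ?thesis
    by simp
qed

end

lemma has_bochner_integral_exp_cumulative:
  fixes M :: "real measure" and f :: "real \<Rightarrow> real" and d :: real
  assumes "sigma_finite_measure M" and M: "sets M = sets borel"
    and f: "set_integrable M {0<..} f" and f_nonneg: "\<And>x. 0 < x \<Longrightarrow> 0 \<le> f x"
    and d: "d > 0"
  shows "has_bochner_integral lborel
      (\<lambda>r. indicator {0<..} r * exp (- d * r) * (LINT x:{0<..r}|M. f x))
      ((LINT x:{0<..}|M. exp (- d * x) * f x) / d)"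
proof -
  define w where "w r = indicator {0<..} r * exp (- d * r)" for r :: real
  define g where "g x = indicator {0<..} x * f x" for x :: real
  define C where "C r = (\<integral>x. indicator {..r} x * g x \<partial>M)" for r
  note [measurable_cong] = M
  have [measurable]: "w \<in> borel_measurable borel"
    unfolding w_def[abs_def] by measurable
  have g_int: "integrable M g"
    using f unfolding g_def by (simp add: set_integrable_def)
  have g_nonneg: "0 \<le> g x" and g_nonpos: "x \<le> 0 \<Longrightarrow> g x = 0" for x
    by (simp_all add: g_def f_nonneg indicator_def)
  have [measurable]: "g \<in> borel_measurable borel"
    using borel_measurable_integrable[OF g_int] by simp
  have C_nonneg: "0 \<le> C r" for r
    unfolding C_def by (intro Bochner_Integration.integral_nonneg) (simp add: g_nonneg)
  have [measurable]: "C \<in> borel_measurable borel"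
    unfolding C_def[abs_def] using mono_cumulative_integral[OF M g_int g_nonneg]
    by (rule borel_measurable_mono)
  have "(\<integral>\<^sup>+ r. ennreal (w r * C r) \<partial>lborel)
      = (\<integral>\<^sup>+ r. ennreal (w r) * (\<integral>\<^sup>+ x. indicator {..r} x * ennreal (g x) \<partial>M) \<partial>lborel)"
    using C_nonneg ennreal_cumulative_integral[OF M g_int g_nonneg]
    by (intro nn_integral_cong) (simp add: w_def C_def ennreal_mult)
  also have "\<dots> = (\<integral>\<^sup>+ x. ennreal (g x) * (\<integral>\<^sup>+ r. indicator {x..} r * ennreal (w r) \<partial>lborel) \<partial>M)"
    by (rule nn_integral_cumulative_swap[OF assms(1) M]) measurable
  also have "\<dots> = ennreal ((\<integral>x. exp (- d * x) * g x \<partial>M) / d)"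
    unfolding w_def by (rule nn_integral_exp_neg_tail[OF M g_int g_nonneg g_nonpos d])
  finally have "has_bochner_integral lborel (\<lambda>r. w r * C r) ((\<integral>x. exp (- d * x) * g x \<partial>M) / d)"
    using d
    by (intro has_bochner_integral_nn_integral)
      (auto simp: w_def C_nonneg g_nonneg intro!: divide_nonneg_pos Bochner_Integration.integral_nonneg)
  moreover have "C r = (LINT x:{0<..r}|M. f x)" for r
    unfolding C_def set_lebesgue_integral_def g_def
    by (intro Bochner_Integration.integral_cong) (auto simp: indicator_def)
  moreover have "(\<integral>x. exp (- d * x) * g x \<partial>M) = (LINT x:{0<..}|M. exp (- d * x) * f x)"
    by (simp add: set_lebesgue_integral_def g_def mult.left_commute)
  ultimately show ?thesis
    by (simp add: w_def)
qed

lemma has_bochner_integral_exp_neg_Ioi: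
  fixes d :: real
  assumes "0 < d"
  shows "has_bochner_integral lborel (\<lambda>r. indicator {0<..} r * exp (- d * r)) (1 / d)"
proof (rule has_bochner_integral_nn_integral)
  have "(\<integral>\<^sup>+ r. ennreal (indicator {0<..} r * exp (- d * r)) \<partial>lborel)
      = (\<integral>\<^sup>+ r. ennreal (indicator {0..} r * exp (- d * r)) \<partial>lborel)"
  proof (rule nn_integral_cong_AE)
    show "AE r in lborel. ennreal (indicator {0<..} r * exp (- d * r)) = ennreal (indicator {0..} r * exp (- d * r))"
      using AE_lborel_singleton[of 0] by eventually_elim (simp add: indicator_def)
  qed
  then show "(\<integral>\<^sup>+ r. ennreal (indicator {0<..} r * exp (- d * r)) \<partial>lborel) = ennreal (1 / d)"
    using nn_integral_exp_neg_atLeast[OF assms, of 0] by simp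
qed (use assms in auto)

locale stationary_density = real_distribution q for q :: "real measure" +
  fixes lam d :: real and \<rho> :: "real \<Rightarrow> real"
  assumes nonpos_null: "emeasure q {..0} = 0"
    and density_nonneg: "\<And>r. 0 \<le> r \<Longrightarrow> 0 \<le> \<rho> r"
    and density_integrable: "set_integrable lborel {0..} \<rho>"
    and balance: "\<And>r. 0 < r \<Longrightarrow>
      \<rho> r - \<rho> 0 + lam * measure q {0<..r} = d * (LINT a:{0<..r}|lborel. \<rho> a)"
begin

definition mass :: real where
  "mass = (LINT r:{0..}|lborel. \<rho> r)"

lemma AE_positive: "AE x in q. 0 < x"
  using nonpos_null by (intro AE_I'[of "{..0}"]) (auto intro: null_setsI)

lemma measure_Ioc_eq_cdf:
  assumes "0 \<le> r"
  shows "measure q {0<..r} = cdf q r"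
proof -
  have "{..0} \<in> null_sets q"
    using nonpos_null by (auto intro: null_setsI)
  then have "measure q ({0<..r} \<union> {..0}) = measure q {0<..r}"
    by (intro measure_Un_null_set) auto
  moreover have "{0<..r} \<union> {..0} = {..r}"
    using assms by auto
  ultimately show ?thesis
    by (simp add: cdf_def)
qed

lemma tendsto_measure_Ioc: "((\<lambda>r. measure q {0<..r}) \<longlongrightarrow> 1) at_top"
proof -
  have "\<forall>\<^sub>F r in at_top. cdf q r = measure q {0<..r}"
    using eventually_ge_at_top[of 0] by eventually_elim (simp add: measure_Ioc_eq_cdf)
  then show ?thesis
    using cdf_lim_at_top_prob by (simp add: tendsto_cong)
qed

lemma tendsto_integral_Ioc: "((\<lambda>r. LINT a:{0<..r}|lborel. \<rho> a) \<longlongrightarrow> mass) at_top"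
proof -
  have "\<forall>\<^sub>F r in at_top. (LINT a:{0..r}|lborel. \<rho> a) = (LINT a:{0<..r}|lborel. \<rho> a)"
    using eventually_ge_at_top[of 0]
    by eventually_elim (simp add: interval_integral_Icc[symmetric] interval_integral_Ioc)
  moreover have "((\<lambda>r. LINT a:{0..r}|lborel. \<rho> a) \<longlongrightarrow> mass) at_top"
    unfolding mass_def by (rule tendsto_set_lebesgue_integral_at_top[OF _ density_integrable]) auto
  ultimately show ?thesis
    by (simp add: tendsto_cong)
qed

lemma exit_rate_eq_mass: "\<rho> 0 = lam - d * mass"
proof -
  have "((\<lambda>r. \<rho> 0 - lam * measure q {0<..r} + d * (LINT a:{0<..r}|lborel. \<rho> a))
      \<longlongrightarrow> \<rho> 0 - lam * 1 + d * mass) at_top"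
    by (intro tendsto_intros tendsto_measure_Ioc tendsto_integral_Ioc)
  moreover have "\<forall>\<^sub>F r in at_top.
      \<rho> 0 - lam * measure q {0<..r} + d * (LINT a:{0<..r}|lborel. \<rho> a) = indicator {0..} r * \<rho> r"
    using eventually_gt_at_top[of 0] by eventually_elim (use balance in \<open>auto simp: algebra_simps\<close>)
  ultimately have "((\<lambda>r. indicator {0..} r * \<rho> r) \<longlongrightarrow> \<rho> 0 - lam + d * mass) at_top"
    by (simp add: tendsto_cong)
  moreover have "integrable lborel (\<lambda>r. indicator {0..} r * \<rho> r)"
    using density_integrable by (simp add: set_integrable_def)
  ultimately have "\<rho> 0 - lam + d * mass = 0"
    by (intro integrable_lborel_tendsto_at_top_eq_0)
  then show ?thesis
    by simp
qed

lemma set_integrable_density_Ioi: "set_integrable lborel {0<..} \<rho>"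
  by (rule set_integrable_subset[OF density_integrable]) auto

lemma set_integrable_exp_density:
  assumes "0 \<le> d"
  shows "set_integrable lborel {0<..} (\<lambda>x. exp (- d * x) * \<rho> x)"
proof -
  have int: "integrable lborel (\<lambda>x. indicator {0<..} x * \<rho> x)"
    using set_integrable_density_Ioi by (simp add: set_integrable_def)
  show ?thesis
    unfolding set_integrable_def
  proof (rule Bochner_Integration.integrable_bound[OF int])
    have "(\<lambda>x. exp (- d * x) * (indicator {0<..} x * \<rho> x)) \<in> borel_measurable lborel"
      using borel_measurable_integrable[OF int] by measurable
    then show "(\<lambda>x. indicator {0<..} x *\<^sub>R (exp (- d * x) * \<rho> x)) \<in> borel_measurable lborel"
      by (simp add: mult_ac)
    show "AE x in lborel. norm (indicator {0<..} x *\<^sub>R (exp (- d * x) * \<rho> x)) \<le> norm (indicator {0<..} x * \<rho> x)"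
      using assms density_nonneg by (auto simp: indicator_def abs_mult mult_left_le_one_le)
  qed
qed

lemma has_bochner_integral_exp_cumulative_measure:
  assumes "0 < d"
  shows "has_bochner_integral lborel (\<lambda>r. indicator {0<..} r * exp (- d * r) * measure q {0<..r})
    (laplace_tr q d / d)"
proof -
  have "(LINT x:{0<..}|q. exp (- d * x) * 1) = laplace_tr q d"
    unfolding laplace_tr_def set_lebesgue_integral_def
    using AE_positive by (intro integral_cong_AE) (auto elim!: eventually_mono)
  then show ?thesis
    using has_bochner_integral_exp_cumulative[OF prob_space_imp_sigma_finite[OF prob_space_axioms]
        events_eq_borel _ _ assms, of "\<lambda>_. 1"]
    by (simp add: set_integrable_def set_lebesgue_integral_def integrable_real_indicator
        emeasure_finite less_top[symmetric])
qed

lemma has_bochner_integral_exp_cumulative_density: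
  assumes "0 < d"
  shows "has_bochner_integral lborel
    (\<lambda>r. indicator {0<..} r * exp (- d * r) * (LINT a:{0<..r}|lborel. \<rho> a))
    ((LINT x:{0<..}|lborel. exp (- d * x) * \<rho> x) / d)"
  by (rule has_bochner_integral_exp_cumulative[OF lborel.sigma_finite_measure_axioms _
        set_integrable_density_Ioi _ assms]) (simp_all add: density_nonneg)

lemma exit_rate_eq_laplace:
  assumes d: "0 < d"
  shows "\<rho> 0 = lam * laplace_tr q d"
proof -
  define w where "w r = indicator {0<..} r * exp (- d * r)" for r :: real
  define F where "F r = measure q {0<..r}" for r
  define G where "G r = (LINT a:{0<..r}|lborel. \<rho> a)" for r
  define A where "A = (LINT x:{0<..}|lborel. exp (- d * x) * \<rho> x)"
  have "has_bochner_integral lborel (\<lambda>r. w r * \<rho> r) A"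
    using has_bochner_integral_integrable[OF set_integrable_exp_density[unfolded set_integrable_def]] d
    by (simp add: A_def set_lebesgue_integral_def w_def mult.assoc)
  then have lhs: "has_bochner_integral lborel (\<lambda>r. w r * \<rho> r + lam * (w r * F r))
      (A + lam * (laplace_tr q d / d))"
    using has_bochner_integral_exp_cumulative_measure[OF d]
    by (intro has_bochner_integral_add has_bochner_integral_mult_right) (simp_all add: w_def F_def)
  have rhs: "has_bochner_integral lborel (\<lambda>r. \<rho> 0 * w r + d * (w r * G r)) (\<rho> 0 * (1 / d) + d * (A / d))"
    using has_bochner_integral_exp_neg_Ioi[OF d] has_bochner_integral_exp_cumulative_density[OF d]
    by (intro has_bochner_integral_add has_bochner_integral_mult_right) (simp_all add: w_def G_def A_def)
  have pointwise: "w r * \<rho> r + lam * (w r * F r) = \<rho> 0 * w r + d * (w r * G r)" for r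
  proof (cases "0 < r")
    case True
    have "\<rho> r + lam * F r = \<rho> 0 + d * G r"
      using balance[OF True] by (simp add: F_def G_def)
    from arg_cong[where f="\<lambda>t. w r * t", OF this] show ?thesis
      by (simp add: algebra_simps)
  qed (simp add: w_def)
  from rhs have "has_bochner_integral lborel (\<lambda>r. w r * \<rho> r + lam * (w r * F r)) (\<rho> 0 * (1 / d) + d * (A / d))"
    by (simp only: pointwise)
  with lhs have "A + lam * (laplace_tr q d / d) = \<rho> 0 * (1 / d) + d * (A / d)"
    by (rule has_bochner_integral_eq)
  then show ?thesis
    using d by (simp add: field_simps)
qed

lemma mass_eq_laplace:
  assumes "0 < d"
  shows "lam * (1 - laplace_tr q d) = d * mass"
  using exit_rate_eq_mass exit_rate_eq_laplace[OF assms] by (simp add: algebra_simps)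

end

theorem proposition2p4:
  fixes lam d :: real and q :: "real measure" and \<rho> :: "real \<Rightarrow> real"
  assumes lam_pos: "lam > 0" and d_nonneg: "d \<ge> 0"
    and q_prob: "prob_space q" and q_sets: "sets q = sets borel"
    and q_support: "emeasure q {..0} = 0"
    and q_decomp: "\<exists>qa D p. sets qa = sets borel \<and> absolutely_continuous lborel qa
        \<and> finite D \<and> D \<subseteq> {0<..} \<and> (\<forall>r\<in>D. p r > (0::real))
        \<and> (\<forall>A\<in>sets borel. emeasure q A
              = emeasure qa A + ennreal (\<Sum>r\<in>D. p r * indicator A r))"
    and q_mean: "integrable q (\<lambda>x. x)"
    and \<rho>_nonneg: "\<And>r. r \<ge> 0 \<Longrightarrow> \<rho> r \<ge> 0"
    and \<rho>_int: "set_integrable lborel {0..} \<rho>"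
    and N_pos: "(LINT r:{0..}|lborel. \<rho> r) > 0"
    and stat: "\<And>s r. 0 \<le> s \<Longrightarrow> s < r \<Longrightarrow>
        \<rho> r - \<rho> s + lam * measure q {s<..r} = d * (LINT a:{s<..r}|lborel. \<rho> a)"
  shows "let N = (LINT r:{0..}|lborel. \<rho> r); \<mu>in = lam / N; \<mu>out = \<rho> 0 / N in
           \<mu>out = \<mu>in - d
         \<and> (d > 0 \<longrightarrow>
              N = lam * (1 - laplace_tr q d) / d
            \<and> \<mu>in = d / (1 - laplace_tr q d)
            \<and> \<mu>out = d * laplace_tr q d / (1 - laplace_tr q d)
            \<and> \<mu>out = \<mu>in * laplace_tr q d)"
proof -
  have "stationary_density q lam d \<rho>"
    unfolding stationary_density_def stationary_density_axioms_def
      real_distribution_def real_distribution_axioms_def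
    using q_prob q_sets q_support \<rho>_nonneg \<rho>_int stat[OF order_refl] by blast
  then interpret stationary_density q lam d \<rho> .
  have N: "(LINT r:{0..}|lborel. \<rho> r) = mass" and mass_pos: "0 < mass"
    using N_pos by (simp_all add: mass_def)
  show ?thesis
    unfolding Let_def N
  proof (intro conjI impI)
    show "\<rho> 0 / mass = lam / mass - d"
      using exit_rate_eq_mass mass_pos by (simp add: field_simps)
    assume d: "0 < d"
    have "0 < 1 - laplace_tr q d"
      using mass_eq_laplace[OF d] d mass_pos lam_pos by (metis mult_pos_pos zero_less_mult_pos)
    then show \<mu>in: "lam / mass = d / (1 - laplace_tr q d)"
      using mass_eq_laplace[OF d] mass_pos by (simp add: field_simps)
    show "mass = lam * (1 - laplace_tr q d) / d"
      using mass_eq_laplace[OF d] d by (simp add: field_simps)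
    show "\<rho> 0 / mass = lam / mass * laplace_tr q d"
      using exit_rate_eq_laplace[OF d] by simp
    with \<mu>in show "\<rho> 0 / mass = d * laplace_tr q d / (1 - laplace_tr q d)"
      by simp
  qed
qed

end
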